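(* Fix an integer $l\ge -1$ and let $l_1=\lfloor\frac{l+1}{2}\rfloor$. Define \[H_l(x)=\sum_{k=-1}^{l}\ \sum_{\substack{\overline{x}\in\mathcal{Y}(k)\\ a(\overline{x})+b(\overline{x})-c(\overline{x})=2k+1-l}}\binom{x-3k-2}{k+1-a(\overline{x})-2b(\overline{x})},\] where $\binom{x-r}{s}$ denotes the polynomial $\frac{(x-r)(x-r-1)\cdots(x-r-s+1)}{s!}$ in $x$. Then $H_l(x)$ is a polynomial of degree $l_1$, and $l_1!\,H_l(x)$ is a monic polynomial with integer coefficients.
   Context: For $\overline{x}=(x_1,\ldots,x_t)\in\{1,2,3\}^t$ let $a(\overline{x})=\#\{i: x_i=2\}$, $b(\overline{x})=\#\{i: x_i=3\}$, and $c(\overline{x})=\#\{i\in[1,t]: \exists j_1,j_2\in[1,t],\ j_1+j_2=i,\ (x_{j_1},x_{j_2},x_i)=(1,1,2)\}$. For an integer $k\ge 0$, $\mathcal{Y}(k)$ is the set of tuples $\overline{x}\in\{1,2,3\}^{2k+1}$ such that (i) whenever $i_1,i_2,i_3\in[1,2k+1]$ satisfy $i_1+i_2=i_3$, $(x_{i_1},x_{i_2},x_{i_3})\ne(1,1,3)$, and (ii) $a(\overline{x})+2b(\overline{x})\le k+1$; $\mathcal{Y}(-1)=\{\emptyset\}$ consists of the empty tuple (with $a=b=c=0$). *)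

theory Defs
  imports "HOL-Computational_Algebra.Polynomial"
begin

text \<open>Tuples in {1,2,3}^t are lists; the paper's 1-based entry x_i is xs ! (i - 1).\<close>

definition cnt_a :: "nat list \<Rightarrow> nat" where
  "cnt_a xs = card {i \<in> {1..length xs}. xs ! (i - 1) = 2}"

definition cnt_b :: "nat list \<Rightarrow> nat" where
  "cnt_b xs = card {i \<in> {1..length xs}. xs ! (i - 1) = 3}"

definition cnt_c :: "nat list \<Rightarrow> nat" where
  "cnt_c xs = card {i \<in> {1..length xs}. \<exists>j1\<in>{1..length xs}. \<exists>j2\<in>{1..length xs}.
      j1 + j2 = i \<and> xs ! (j1 - 1) = 1 \<and> xs ! (j2 - 1) = 1 \<and> xs ! (i - 1) = 2}"

definition Yset :: "int \<Rightarrow> nat list set" where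
  "Yset k = (if k = -1 then {[]} else
     {xs. length xs = nat (2 * k + 1) \<and> set xs \<subseteq> {1, 2, 3} \<and>
          (\<forall>i1\<in>{1..length xs}. \<forall>i2\<in>{1..length xs}. \<forall>i3\<in>{1..length xs}.
              i1 + i2 = i3 \<longrightarrow>
              \<not> (xs ! (i1 - 1) = 1 \<and> xs ! (i2 - 1) = 1 \<and> xs ! (i3 - 1) = 3)) \<and>
          int (cnt_a xs) + 2 * int (cnt_b xs) \<le> k + 1})"

definition binom_poly :: "int \<Rightarrow> nat \<Rightarrow> rat poly" where
  "binom_poly r s = smult (1 / fact s) (\<Prod>i<s. [: - (of_int r + of_nat i), 1 :])"

definition H_poly :: "int \<Rightarrow> rat poly" where
  "H_poly l = (\<Sum>k\<in>{-1..l}. \<Sum>xs\<in>{xs \<in> Yset k.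
       int (cnt_a xs) + int (cnt_b xs) - int (cnt_c xs) = 2 * k + 1 - l}.
       binom_poly (3 * k + 2) (nat (k + 1 - int (cnt_a xs) - 2 * int (cnt_b xs))))"

end

theory Submission
  imports Defs
begin

(* The summand indexed by k and x is binom(x - 3k - 2, s) with s = k + 1 - a - 2b, a polynomial
   of degree s with leading coefficient 1/s!.  The side condition a + b - c = 2k + 1 - l turns
   into 2s + a + 3b + c = l + 1, so s <= l1, and since c <= a, equality s = l1 forces
   (a, b, c) = (0, 0, 0) for odd l and (1, 0, 0) for even l.  The tuple is then all ones, resp.
   all ones but a single 2, and that 2 must come first: otherwise, being preceded only by ones,
   it sits at a position i > 1 with x_1 = x_(i-1) = 1 and is counted by c.  So exactly one summand
   has degree l1, and multiplying by l1! clears all denominators because s! divides l1!. *)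

lemma coeff_prod_Ints:
  fixes f :: "'i \<Rightarrow> 'a::comm_ring_1 poly"
  assumes "\<And>i j. i \<in> A \<Longrightarrow> coeff (f i) j \<in> \<int>"
  shows "coeff (prod f A) n \<in> \<int>"
  using assms
proof (induction A arbitrary: n rule: infinite_finite_induct)
  case (insert i A)
  then show ?case
    by (simp add: coeff_mult Ints_sum Ints_mult)
qed (simp_all add: coeff_1)

lemma degree_binom_poly: "degree (binom_poly r s) = s"
  unfolding binom_poly_def by (simp add: degree_prod_eq_sum_degree)

lemma lead_coeff_binom_poly: "lead_coeff (binom_poly r s) = 1 / fact s"
  unfolding binom_poly_def by (simp add: lead_coeff_smult lead_coeff_prod)

lemma binom_poly_neq_0: "binom_poly r s \<noteq> 0"
  using lead_coeff_binom_poly[of r s] by auto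

lemma coeff_smult_fact_binom_poly_Ints:
  assumes "s \<le> m"
  shows "coeff (smult (fact m) (binom_poly r s)) j \<in> \<int>"
proof -
  obtain d :: nat where d: "fact m = fact s * d"
    using fact_dvd[OF assms] by (auto elim: dvdE)
  then have "(fact m :: rat) = fact s * of_nat d"
    by (metis of_nat_fact of_nat_mult)
  then have "smult (fact m) (binom_poly r s) =
      smult (of_nat d) (\<Prod>i<s. [: - (of_int r + of_nat i), 1 :])"
    by (simp add: binom_poly_def)
  moreover have "coeff (\<Prod>i<s. [: - (of_int r + of_nat i), 1 :] :: rat poly) j \<in> \<int>"
    by (rule coeff_prod_Ints) (simp add: coeff_pCons split: nat.split)
  ultimately show ?thesis
    by (simp add: Ints_mult)
qed

lemma degree_lead_coeff_sum_dominant: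
  fixes p :: "'i \<Rightarrow> 'a::comm_monoid_add poly"
  assumes "finite I" "i0 \<in> I" "p i0 \<noteq> 0" "degree (p i0) = n"
    and "\<And>i. i \<in> I - {i0} \<Longrightarrow> degree (p i) < n"
  shows "degree (sum p I) = n" "lead_coeff (sum p I) = lead_coeff (p i0)"
proof -
  have "coeff (sum p I) n = coeff (p i0) n + (\<Sum>i\<in>I - {i0}. coeff (p i) n)"
    using assms(1,2) by (simp add: coeff_sum sum.remove)
  also have "\<dots> = coeff (p i0) n"
    using assms(5) by (simp add: coeff_eq_0)
  finally have top: "coeff (sum p I) n = lead_coeff (p i0)"
    using assms(4) by simp
  moreover have "degree (sum p I) \<le> n"
    using assms by (intro degree_sum_le) (auto intro: less_imp_le)
  moreover have "lead_coeff (p i0) \<noteq> 0"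
    using assms(3) by simp
  ultimately show "degree (sum p I) = n"
    using le_degree by (metis antisym)
  then show "lead_coeff (sum p I) = lead_coeff (p i0)"
    using top by simp
qed

lemma card_positions_eq_count_list:
  "card {i \<in> {1..length xs}. xs ! (i - 1) = x} = count_list xs x"
proof -
  have "{i \<in> {1..length xs}. xs ! (i - 1) = x} = Suc ` {i. i < length xs \<and> xs ! i = x}"
  proof (intro equalityI subsetI)
    fix i assume "i \<in> {i \<in> {1..length xs}. xs ! (i - 1) = x}"
    then show "i \<in> Suc ` {i. i < length xs \<and> xs ! i = x}"
      by (intro image_eqI[of _ _ "i - 1"]) auto
  qed auto
  then have "card {i \<in> {1..length xs}. xs ! (i - 1) = x} = length (filter (\<lambda>y. y = x) xs)"
    by (simp add: card_image length_filter_conv_card)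
  also have "\<dots> = count_list xs x"
    by (induction xs) auto
  finally show ?thesis .
qed

lemma cnt_a_eq_count_list: "cnt_a xs = count_list xs 2"
  unfolding cnt_a_def by (rule card_positions_eq_count_list)

lemma cnt_b_eq_count_list: "cnt_b xs = count_list xs 3"
  unfolding cnt_b_def by (rule card_positions_eq_count_list)

lemma cnt_c_le_cnt_a: "cnt_c xs \<le> cnt_a xs"
  unfolding cnt_c_def cnt_a_def by (rule card_mono) auto

lemma cnt_c_2_replicate_1: "cnt_c (2 # replicate n 1) = 0"
  unfolding cnt_c_def by (auto simp: nth_Cons')

lemma hd_eq_2_if_cnt_c_eq_0:
  assumes "set xs \<subseteq> {1, 2, 3}" "3 \<notin> set xs" "2 \<in> set xs" "cnt_c xs = 0"
  shows "hd xs = 2"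
proof (rule ccontr)
  assume "hd xs \<noteq> 2"
  obtain ys zs where xs: "xs = ys @ 2 # zs" and "2 \<notin> set ys"
    using split_list_first[OF assms(3)] by blast
  with assms(1,2) have ones: "set ys \<subseteq> {1}"
    by auto
  define m where "m = length ys"
  define C where "C = {i \<in> {1..length xs}. \<exists>j1\<in>{1..length xs}. \<exists>j2\<in>{1..length xs}.
      j1 + j2 = i \<and> xs ! (j1 - 1) = 1 \<and> xs ! (j2 - 1) = 1 \<and> xs ! (i - 1) = 2}"
  have "m > 0"
    using \<open>hd xs \<noteq> 2\<close> by (cases ys) (auto simp: xs m_def)
  have "ys ! i = 1" if "i < m" for i
    using nth_mem[of i ys] ones that unfolding m_def by blast
  then have "xs ! 0 = 1" "xs ! (m - 1) = 1" "xs ! m = 2"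
    using \<open>m > 0\<close> by (auto simp: xs m_def nth_append)
  moreover have "m < length xs"
    by (simp add: xs m_def)
  ultimately have "Suc m \<in> C"
    using \<open>m > 0\<close> \<open>m < length xs\<close> unfolding C_def
    by (intro CollectI conjI bexI[of _ 1] bexI[of _ m]) auto
  moreover have "finite C"
    by (simp add: C_def)
  ultimately have "card C \<noteq> 0"
    using card_0_eq by blast
  moreover have "cnt_c xs = card C"
    unfolding cnt_c_def C_def ..
  ultimately show False
    using assms(4) by simp
qed

lemma Yset_memD:
  assumes "xs \<in> Yset k"
  shows "length xs = nat (2 * k + 1)" "set xs \<subseteq> {1, 2, 3}"
    "int (cnt_a xs) + 2 * int (cnt_b xs) \<le> k + 1"
  using assms by (auto simp: Yset_def cnt_a_eq_count_list cnt_b_eq_count_list split: if_splits)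

lemma Yset_memI:
  assumes "k \<ge> -1" "length xs = nat (2 * k + 1)" "set xs \<subseteq> {1, 2, 3}" "3 \<notin> set xs"
    and "int (cnt_a xs) + 2 * int (cnt_b xs) \<le> k + 1"
  shows "xs \<in> Yset k"
proof -
  have "xs ! (i - 1) \<noteq> 3" if "i \<in> {1..length xs}" for i
  proof -
    have "xs ! (i - 1) \<in> set xs"
      using that by (intro nth_mem) auto
    then show ?thesis
      using assms(4) by auto
  qed
  then show ?thesis
    using assms by (auto simp: Yset_def)
qed

lemma finite_Yset: "finite (Yset k)"
proof (rule finite_subset)
  show "Yset k \<subseteq> {xs. set xs \<subseteq> {1, 2, 3} \<and> length xs = nat (2 * k + 1)}"
    using Yset_memD by blast
qed (rule finite_lists_length_eq, simp)

definition H_terms :: "int \<Rightarrow> (int \<times> nat list) set" where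
  "H_terms l = (SIGMA k:{-1..l}. {xs \<in> Yset k.
     int (cnt_a xs) + int (cnt_b xs) - int (cnt_c xs) = 2 * k + 1 - l})"

definition lower_index :: "int \<Rightarrow> nat list \<Rightarrow> nat" where
  "lower_index k xs = nat (k + 1 - int (cnt_a xs) - 2 * int (cnt_b xs))"

lemma finite_H_terms: "finite (H_terms l)"
  unfolding H_terms_def by (simp add: finite_Yset)

lemma H_poly_eq_sum_H_terms:
  "H_poly l = (\<Sum>(k, xs)\<in>H_terms l. binom_poly (3 * k + 2) (lower_index k xs))"
  unfolding H_poly_def H_terms_def lower_index_def by (simp add: sum.Sigma finite_Yset)

lemma lower_index_eq:
  assumes "(k, xs) \<in> H_terms l"
  shows "2 * int (lower_index k xs) + int (cnt_a xs) + 3 * int (cnt_b xs) + int (cnt_c xs) = l + 1"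
proof -
  from assms have mem: "xs \<in> Yset k"
    and "int (cnt_a xs) + int (cnt_b xs) - int (cnt_c xs) = 2 * k + 1 - l"
    by (auto simp: H_terms_def)
  have "int (lower_index k xs) = k + 1 - int (cnt_a xs) - 2 * int (cnt_b xs)"
    using Yset_memD(3)[OF mem] by (simp add: lower_index_def)
  with \<open>int (cnt_a xs) + int (cnt_b xs) - int (cnt_c xs) = 2 * k + 1 - l\<close> show ?thesis
    by linarith
qed

lemma lower_index_le:
  assumes "(k, xs) \<in> H_terms l"
  shows "lower_index k xs \<le> nat ((l + 1) div 2)"
proof -
  have "2 * int (lower_index k xs) \<le> l + 1"
    using lower_index_eq[OF assms] by linarith
  then have "int (lower_index k xs) \<le> (l + 1) div 2"
    by presburger
  then show ?thesis
    by (metis le_nat_iff of_nat_0_le_iff order_trans)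
qed

definition top_tuple :: "int \<Rightarrow> nat list" where
  "top_tuple l = (if odd l then replicate (nat l) 1 else 2 # replicate (nat l) 1)"

lemma top_tuple_counts:
  "cnt_a (top_tuple l) = (if odd l then 0 else 1)" "cnt_b (top_tuple l) = 0" "cnt_c (top_tuple l) = 0"
proof -
  show a: "cnt_a (top_tuple l) = (if odd l then 0 else 1)" and "cnt_b (top_tuple l) = 0"
    by (simp_all add: top_tuple_def cnt_a_eq_count_list cnt_b_eq_count_list)
  show "cnt_c (top_tuple l) = 0"
  proof (cases "odd l")
    case True
    then show ?thesis
      using a cnt_c_le_cnt_a[of "top_tuple l"] by simp
  next
    case False
    then show ?thesis
      using cnt_c_2_replicate_1 by (simp add: top_tuple_def)
  qed
qed

lemma length_top_tuple:
  assumes "l \<ge> -1"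
  shows "length (top_tuple l) = nat (2 * (l div 2) + 1)"
proof (cases "odd l")
  case True
  then have "2 * (l div 2) + 1 = l"
    by presburger
  with True show ?thesis
    by (simp add: top_tuple_def)
next
  case False
  with assms have "2 * (l div 2) + 1 = l + 1" "l \<ge> 0"
    by presburger+
  with False show ?thesis
    by (simp add: top_tuple_def nat_add_distrib)
qed

lemma top_term_mem_H_terms:
  assumes "l \<ge> -1"
  shows "(l div 2, top_tuple l) \<in> H_terms l"
proof -
  have "set (top_tuple l) \<subseteq> {1, 2}"
    by (auto simp: top_tuple_def)
  then have "top_tuple l \<in> Yset (l div 2)"
    using assms length_top_tuple[OF assms] by (intro Yset_memI) (auto simp: top_tuple_counts)
  moreover have "int (cnt_a (top_tuple l)) + int (cnt_b (top_tuple l)) - int (cnt_c (top_tuple l))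
      = 2 * (l div 2) + 1 - l"
    by (simp add: top_tuple_counts)
  moreover have "l div 2 \<in> {-1..l}"
    using assms by simp presburger
  ultimately show ?thesis
    by (simp add: H_terms_def)
qed

lemma lower_index_top_term: "lower_index (l div 2) (top_tuple l) = nat ((l + 1) div 2)"
  by (simp add: lower_index_def top_tuple_counts)

lemma H_terms_top_unique:
  assumes "(k, xs) \<in> H_terms l" "lower_index k xs = nat ((l + 1) div 2)"
  shows "(k, xs) = (l div 2, top_tuple l)"
proof -
  from assms(1) have "l \<ge> -1" and xs: "xs \<in> Yset k"
    and cond: "int (cnt_a xs) + int (cnt_b xs) - int (cnt_c xs) = 2 * k + 1 - l"
    by (auto simp: H_terms_def)
  have "int (lower_index k xs) = (l + 1) div 2"
    using assms(2) \<open>l \<ge> -1\<close> by simp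
  then have "int (cnt_a xs) + 3 * int (cnt_b xs) + int (cnt_c xs) = (l + 1) mod 2"
    using lower_index_eq[OF assms(1)] by presburger
  then have counts: "cnt_a xs = (if odd l then 0 else 1)" "cnt_b xs = 0" "cnt_c xs = 0"
    using cnt_c_le_cnt_a[of xs] by (auto split: if_splits) presburger+
  with cond have k: "k = l div 2"
    by (auto split: if_splits)
  have len: "length xs = length (top_tuple l)"
    using Yset_memD(1)[OF xs] k length_top_tuple[OF \<open>l \<ge> -1\<close>] by simp
  have set_xs: "set xs \<subseteq> {1, 2, 3}" "3 \<notin> set xs"
    using Yset_memD(2)[OF xs] counts by (simp_all add: cnt_b_eq_count_list count_list_0_iff)
  have "xs = top_tuple l"
  proof (cases "odd l")
    case True
    then have "2 \<notin> set xs"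
      using counts by (simp add: cnt_a_eq_count_list count_list_0_iff)
    with set_xs len True have "xs = replicate (nat l) 1"
      by (intro replicate_eqI) (auto simp: top_tuple_def)
    with True show ?thesis
      by (simp add: top_tuple_def)
  next
    case False
    then have "count_list xs 2 = 1"
      using counts by (simp add: cnt_a_eq_count_list)
    then have "2 \<in> set xs"
      by (metis count_notin zero_neq_one)
    with set_xs counts have "hd xs = 2"
      by (intro hd_eq_2_if_cnt_c_eq_0) auto
    then obtain ys where ys: "xs = 2 # ys"
      using \<open>2 \<in> set xs\<close> by (cases xs) auto
    with \<open>count_list xs 2 = 1\<close> set_xs len False have "ys = replicate (nat l) 1"
      by (intro replicate_eqI) (auto simp: top_tuple_def count_list_0_iff)
    with False ys show ?thesis
      by (simp add: top_tuple_def)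
  qed
  with k show ?thesis
    by simp
qed

lemma lower_index_less:
  assumes "(k, xs) \<in> H_terms l" "(k, xs) \<noteq> (l div 2, top_tuple l)"
  shows "lower_index k xs < nat ((l + 1) div 2)"
  using assms lower_index_le[OF assms(1)] H_terms_top_unique[OF assms(1)] by fastforce

lemma degree_H_poly:
  assumes "l \<ge> -1"
  shows "degree (H_poly l) = nat ((l + 1) div 2)"
    and "lead_coeff (H_poly l) = 1 / fact (nat ((l + 1) div 2))"
proof -
  define T where "T = (\<lambda>(k, xs). binom_poly (3 * k + 2) (lower_index k xs))"
  define top where "top = (l div 2, top_tuple l)"
  have "top \<in> H_terms l"
    using top_term_mem_H_terms[OF assms] by (simp add: top_def)
  moreover have "T top \<noteq> 0" "degree (T top) = nat ((l + 1) div 2)"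
    by (simp_all add: T_def top_def binom_poly_neq_0 degree_binom_poly lower_index_top_term)
  moreover have "degree (T t) < nat ((l + 1) div 2)" if "t \<in> H_terms l - {top}" for t
    using that lower_index_less by (cases t) (auto simp: T_def top_def degree_binom_poly)
  ultimately show "degree (H_poly l) = nat ((l + 1) div 2)"
    and "lead_coeff (H_poly l) = 1 / fact (nat ((l + 1) div 2))"
    using degree_lead_coeff_sum_dominant[of "H_terms l" top T, OF finite_H_terms]
    by (simp_all add: H_poly_eq_sum_H_terms T_def top_def lead_coeff_binom_poly lower_index_top_term)
qed

lemma coeff_smult_fact_H_poly_Ints:
  "coeff (smult (fact (nat ((l + 1) div 2))) (H_poly l)) i \<in> \<int>"
proof -
  have "coeff (smult (fact (nat ((l + 1) div 2))) (H_poly l)) i =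
      (\<Sum>(k, xs)\<in>H_terms l.
         coeff (smult (fact (nat ((l + 1) div 2))) (binom_poly (3 * k + 2) (lower_index k xs))) i)"
    by (simp add: H_poly_eq_sum_H_terms coeff_sum sum_distrib_left case_prod_unfold)
  also have "\<dots> \<in> \<int>"
    using lower_index_le
    by (intro Ints_sum) (auto simp del: coeff_smult intro!: coeff_smult_fact_binom_poly_Ints)
  finally show ?thesis .
qed

theorem proposition8p11:
  fixes l :: int
  assumes "l \<ge> -1"
  shows "degree (H_poly l) = nat ((l + 1) div 2) \<and>
         lead_coeff (smult (fact (nat ((l + 1) div 2))) (H_poly l)) = 1 \<and>
         (\<forall>i. coeff (smult (fact (nat ((l + 1) div 2))) (H_poly l)) i \<in> \<int>)"
  using degree_H_poly[OF assms] coeff_smult_fact_H_poly_Ints by (simp add: lead_coeff_smult)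

end
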